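(* For every $z\in\mathfrak U$ one has $T(z)\neq0$ and $z-\frac1{T(z)}>0$, so that $\tau(z):=\ln\big(z-\frac1{T(z)}\big)$ is real; moreover, whenever $\tau(z)\in(V_{j-1},V_j)$ for some $1\le j\le n$, the quantity $\chi(z)$ is real. In particular, for every such $z\in\mathfrak U$, $(\tau(z),\chi(z))$ is a real point on the frozen boundary.
   Context: Let $V_0<V_1<\dots<V_n$, $\beta_1,\dots,\beta_n\in[-1,1]$, $\beta_0:=-1$, $\beta_{n+1}:=1$, $\beta_i\ne\beta_{i+1}$ for all $i$; $V:[V_0,V_n]\to\mathbb R$ continuous, linear with slope $\beta_i$ on $[V_{i-1},V_i]$. Define $$T(z)=\sum_{i=0}^n\tfrac12(\beta_{i+1}-\beta_i)\frac1{z-e^{V_i}},\qquad \mathfrak U=(-\infty,e^{V_0})\cup(e^{V_n},\infty)\cup\bigcup_{1\le i\le n,\ \beta_i=\pm1}(e^{V_{i-1}},e^{V_i}).$$ For $z\in\mathfrak U$ with $\tau=\tau(z)\in(V_{j-1},V_j)$, define $$\chi(z)=-\sum_{i=1}^{j-1}\tfrac12(1+\beta_i)\operatorname{Ln}\frac{ze^{-V_i}-1}{ze^{-V_{i-1}}-1}-\tfrac12(1+\beta_j)\operatorname{Ln}\frac{ze^{-\tau}-1}{ze^{-V_{j-1}}-1}+\tfrac12(1-\beta_j)\operatorname{Ln}\frac{ze^{-V_j}-1}{ze^{-\tau}-1}+\sum_{i=j+1}^n\tfrac12(1-\beta_i)\operatorname{Ln}\frac{ze^{-V_i}-1}{ze^{-V_{i-1}}-1}-\tfrac12\tau+\tfrac12(V(V_0)+V_0),$$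 where $\operatorname{Ln}$ is the principal logarithm (imaginary part in $(-\pi,\pi]$) and a term whose coefficient is $0$ is taken to be $0$. The frozen boundary is the set of points $(\tau(z),\chi(z))$; these are exactly the $(\tau,\chi)$ for which $S_{\tau,\chi}$ (the function $\int_{V_0}^{\tau}\frac12(1+V')\ln(1-e^{M}/z)dM-\int_\tau^{V_n}\frac12(1-V')\ln(1-e^{-M}z)dM-(\chi-\frac12V(\tau))\ln z$) has a double real critical point. *)

theory Defs
  imports "HOL-Analysis.Analysis"
begin

text \<open>Breakpoints V_0 < ... < V_n are given by Vb :: nat => real, slopes by
  beta :: nat => real (with beta 0 = -1, beta (n+1) = 1), the piecewise linear
  function V by Vf :: real => real.\<close>

definition Tfun :: "nat \<Rightarrow> (nat \<Rightarrow> real) \<Rightarrow> (nat \<Rightarrow> real) \<Rightarrow> real \<Rightarrow> real" where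
  "Tfun n Vb beta z = (\<Sum>i=0..n. (beta (Suc i) - beta i) / 2 * (1 / (z - exp (Vb i))))"

definition frakU :: "nat \<Rightarrow> (nat \<Rightarrow> real) \<Rightarrow> (nat \<Rightarrow> real) \<Rightarrow> real set" where
  "frakU n Vb beta = {..<exp (Vb 0)} \<union> {exp (Vb n)<..} \<union>
     (\<Union>i\<in>{i. 1 \<le> i \<and> i \<le> n \<and> (beta i = 1 \<or> beta i = -1)}. {exp (Vb (i - 1))<..<exp (Vb i)})"

definition taufun :: "nat \<Rightarrow> (nat \<Rightarrow> real) \<Rightarrow> (nat \<Rightarrow> real) \<Rightarrow> real \<Rightarrow> real" where
  "taufun n Vb beta z = ln (z - 1 / Tfun n Vb beta z)"

text \<open>c * Ln w, with the convention that a term with coefficient 0 is 0.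
  Ln is the principal complex logarithm (imaginary part in (-pi, pi]).\<close>
definition cLn :: "real \<Rightarrow> real \<Rightarrow> complex" where
  "cLn c w = (if c = 0 then 0 else complex_of_real c * Ln (complex_of_real w))"

definition ratio :: "real \<Rightarrow> real \<Rightarrow> real \<Rightarrow> real" where
  "ratio z a b = (z * exp (- a) - 1) / (z * exp (- b) - 1)"

text \<open>chi(z), given j with tau(z) in (V_{j-1}, V_j).\<close>
definition chifun :: "nat \<Rightarrow> (nat \<Rightarrow> real) \<Rightarrow> (nat \<Rightarrow> real) \<Rightarrow> (real \<Rightarrow> real) \<Rightarrow> nat \<Rightarrow> real \<Rightarrow> complex" where
  "chifun n Vb beta Vf j z =
    (let t = taufun n Vb beta z in
      - (\<Sum>i\<in>{1..<j}. cLn ((1 + beta i) / 2) (ratio z (Vb i) (Vb (i - 1))))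
      - cLn ((1 + beta j) / 2) (ratio z t (Vb (j - 1)))
      + cLn ((1 - beta j) / 2) (ratio z (Vb j) t)
      + (\<Sum>i\<in>{j<..n}. cLn ((1 - beta i) / 2) (ratio z (Vb i) (Vb (i - 1))))
      - complex_of_real (t / 2) + complex_of_real ((Vf (Vb 0) + Vb 0) / 2))"

end

theory Submission
  imports Defs
begin

text \<open>Write \<open>a i = exp (V i)\<close> and \<open>c i = (\<beta> (i+1) - \<beta> i) / 2\<close>, so that
  \<open>T z = \<Sum>i. c i / (z - a i)\<close> and \<open>\<Sum>i. c i = 1\<close>. Summation by parts rewrites \<open>T z\<close> both as
  \<open>1/(z - a 0) + \<Sum>i\<ge>1. (1 - \<beta> i)/2 * \<Delta> i\<close> and as \<open>1/(z - a n) - \<Sum>i\<ge>1. (1 + \<beta> i)/2 * \<Delta> i\<close>,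
  where the increment \<open>\<Delta> i = 1/(z - a i) - 1/(z - a (i-1))\<close> is positive unless \<open>z\<close> lies in
  \<open>[a (i-1), a i]\<close>. A point of \<open>frakU\<close> lies in a gap \<open>(a (k-1), a k)\<close> with \<open>\<beta> k = \<plusminus>1\<close>
  (the unbounded gaps carry \<open>\<beta> 0 = -1\<close> and \<open>\<beta> (n+1) = 1\<close>), so the only increment that can be
  negative has coefficient zero in one of the two expansions. For \<open>\<beta> k = 1\<close> this gives
  \<open>T z > 0\<close>, and the same expansion of \<open>z T z - 1 = \<Sum>i. c i * a i / (z - a i)\<close> gives
  \<open>0 < exp \<tau> = z - 1/T z < z\<close>; for \<open>\<beta> k = -1\<close> it gives \<open>T z < 0\<close>, hence \<open>exp \<tau> > z\<close>,
  and for \<open>z \<le> 0\<close> positivity again comes from the expansion of \<open>z T z - 1\<close>.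
  Each logarithm in \<open>\<chi>\<close> has argument \<open>(z e\<^sup>-\<^sup>x - 1)/(z e\<^sup>-\<^sup>y - 1)\<close>, which is positive when
  \<open>z\<close> does not lie between \<open>e\<^sup>x\<close> and \<open>e\<^sup>y\<close>; knowing that \<open>exp \<tau>\<close> is below \<open>z\<close> when \<open>\<beta> k = 1\<close>
  and above it when \<open>\<beta> k = -1\<close>, this holds for every logarithm with nonzero coefficient.\<close>

lemma sum_by_parts:
  fixes b x :: "nat \<Rightarrow> real"
  shows "(\<Sum>i=0..n. (b (Suc i) - b i) * x i)
           = b (Suc n) * x n - b 0 * x 0 - (\<Sum>i=1..n. b i * (x i - x (i - 1)))"
  by (induction n) (simp_all add: algebra_simps)

lemma sum_telescope_from_1:
  fixes x :: "nat \<Rightarrow> real"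
  shows "(\<Sum>i=1..n. x i - x (i - 1)) = x n - x 0"
  by (induction n) simp_all

lemma slope_weighted_sum_eq_first:
  fixes b x :: "nat \<Rightarrow> real"
  assumes "b 0 = -1" and "b (Suc n) = 1"
  shows "(\<Sum>i=0..n. (b (Suc i) - b i) / 2 * x i)
           = x 0 + (\<Sum>i=1..n. (1 - b i) / 2 * (x i - x (i - 1)))"
proof -
  let ?S = "\<Sum>i=1..n. b i * (x i - x (i - 1))"
  have "(\<Sum>i=0..n. (b (Suc i) - b i) / 2 * x i) = (x n + x 0 - ?S) / 2"
    using sum_by_parts[of b x n] assms by (simp add: sum_divide_distrib[symmetric])
  moreover have "(\<Sum>i=1..n. (1 - b i) / 2 * (x i - x (i - 1))) = (x n - x 0 - ?S) / 2"
    using sum_telescope_from_1[of x n]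
    by (simp add: sum_divide_distrib[symmetric] left_diff_distrib sum_subtractf)
  ultimately show ?thesis by simp
qed

lemma slope_weighted_sum_eq_last:
  fixes b x :: "nat \<Rightarrow> real"
  assumes "b 0 = -1" and "b (Suc n) = 1"
  shows "(\<Sum>i=0..n. (b (Suc i) - b i) / 2 * x i)
           = x n - (\<Sum>i=1..n. (1 + b i) / 2 * (x i - x (i - 1)))"
proof -
  have "(\<Sum>i=1..n. (1 + b i) / 2 * (x i - x (i - 1)))
          = (\<Sum>i=1..n. (x i - x (i - 1)) - (1 - b i) / 2 * (x i - x (i - 1)))"
    by (rule sum.cong) (simp_all add: field_simps)
  then show ?thesis
    using slope_weighted_sum_eq_first[OF assms] sum_telescope_from_1[of x n]
    by (simp add: sum_subtractf)
qed

lemma slope_weighted_sum_ge_first: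
  fixes b x :: "nat \<Rightarrow> real"
  assumes "b 0 = -1" and "b (Suc n) = 1"
    and "\<And>i. 1 \<le> i \<Longrightarrow> i \<le> n \<Longrightarrow> 0 \<le> (1 - b i) * (x i - x (i - 1))"
  shows "x 0 \<le> (\<Sum>i=0..n. (b (Suc i) - b i) / 2 * x i)"
proof -
  have "0 \<le> (\<Sum>i=1..n. (1 - b i) / 2 * (x i - x (i - 1)))"
    by (rule sum_nonneg) (use assms(3) in auto)
  then show ?thesis unfolding slope_weighted_sum_eq_first[OF assms(1,2)] by simp
qed

lemma slope_weighted_sum_le_first:
  fixes b x :: "nat \<Rightarrow> real"
  assumes "b 0 = -1" and "b (Suc n) = 1"
    and "\<And>i. 1 \<le> i \<Longrightarrow> i \<le> n \<Longrightarrow> (1 - b i) * (x i - x (i - 1)) \<le> 0"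
  shows "(\<Sum>i=0..n. (b (Suc i) - b i) / 2 * x i) \<le> x 0"
proof -
  have "(\<Sum>i=1..n. (1 - b i) / 2 * (x i - x (i - 1))) \<le> 0"
    by (rule sum_nonpos) (use assms(3) in auto)
  then show ?thesis unfolding slope_weighted_sum_eq_first[OF assms(1,2)] by simp
qed

lemma slope_weighted_sum_le_last:
  fixes b x :: "nat \<Rightarrow> real"
  assumes "b 0 = -1" and "b (Suc n) = 1"
    and "\<And>i. 1 \<le> i \<Longrightarrow> i \<le> n \<Longrightarrow> 0 \<le> (1 + b i) * (x i - x (i - 1))"
  shows "(\<Sum>i=0..n. (b (Suc i) - b i) / 2 * x i) \<le> x n"
proof -
  have "0 \<le> (\<Sum>i=1..n. (1 + b i) / 2 * (x i - x (i - 1)))"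
    by (rule sum_nonneg) (use assms(3) in auto)
  then show ?thesis unfolding slope_weighted_sum_eq_last[OF assms(1,2)] by simp
qed

lemma slope_weighted_sum_affine:
  fixes b x :: "nat \<Rightarrow> real"
  assumes "b 0 = -1" and "b (Suc n) = 1"
  shows "(\<Sum>i=0..n. (b (Suc i) - b i) / 2 * (s * x i - 1))
           = s * (\<Sum>i=0..n. (b (Suc i) - b i) / 2 * x i) - 1"
proof -
  have "(\<Sum>i=0..n. (b (Suc i) - b i) / 2) = 1"
    using slope_weighted_sum_eq_first[OF assms, of "\<lambda>_. 1"] by simp
  then show ?thesis
    by (simp add: right_diff_distrib sum_subtractf sum_distrib_left mult.left_commute)
qed

definition same_side :: "real \<Rightarrow> real \<Rightarrow> real \<Rightarrow> bool" where
  "same_side z x y \<longleftrightarrow> (x < z \<and> y < z) \<or> (z < x \<and> z < y)"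

lemma same_side_inverse_less:
  fixes x y z :: real
  assumes "x < y" and "same_side z x y"
  shows "1 / (z - x) < 1 / (z - y)"
proof -
  have "z \<noteq> x" "z \<noteq> y" and "0 < (z - y) * (z - x)"
    using assms(2) unfolding same_side_def by (auto intro: mult_pos_pos mult_neg_neg)
  then have "1 / (z - y) - 1 / (z - x) = (y - x) / ((z - y) * (z - x))"
    by (simp add: field_simps)
  also have "\<dots> > 0"
    using assms(1) \<open>0 < (z - y) * (z - x)\<close> by simp
  finally show ?thesis by simp
qed

lemma ratio_pos:
  assumes "same_side z (exp a) (exp b)"
  shows "0 < ratio z a b"
proof -
  have sign: "0 < z * exp (- c) - 1 \<longleftrightarrow> exp c < z" "z * exp (- c) - 1 < 0 \<longleftrightarrow> z < exp c" for c
    by (simp_all add: exp_minus field_simps)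
  show ?thesis
    using assms unfolding ratio_def same_side_def sign[symmetric]
    by (auto intro: divide_pos_pos divide_neg_neg)
qed

lemma Im_cLn_ratio:
  assumes "c = 0 \<or> same_side z (exp a) (exp b)"
  shows "Im (cLn c (ratio z a b)) = 0"
  using assms ratio_pos[of z a b] unfolding cLn_def by (auto simp: Ln_of_real)

lemma same_side_commute: "same_side z x y \<longleftrightarrow> same_side z y x"
  unfolding same_side_def by auto

lemma Im_chifun_eq_0:
  fixes n :: nat and Vb :: "nat \<Rightarrow> real" and beta :: "nat \<Rightarrow> real"
    and Vf :: "real \<Rightarrow> real" and z :: real
  defines "t \<equiv> taufun n Vb beta z"
  assumes "\<And>i. 1 \<le> i \<Longrightarrow> i < j \<Longrightarrow> beta i = -1 \<or> same_side z (exp (Vb i)) (exp (Vb (i - 1)))"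
    and "beta j = -1 \<or> same_side z (exp t) (exp (Vb (j - 1)))"
    and "beta j = 1 \<or> same_side z (exp (Vb j)) (exp t)"
    and "\<And>i. j < i \<Longrightarrow> i \<le> n \<Longrightarrow> beta i = 1 \<or> same_side z (exp (Vb i)) (exp (Vb (i - 1)))"
  shows "Im (chifun n Vb beta Vf j z) = 0"
proof -
  have "(\<Sum>i\<in>{1..<j}. Im (cLn ((1 + beta i) / 2) (ratio z (Vb i) (Vb (i - 1))))) = 0"
    by (rule sum.neutral) (use assms(2) Im_cLn_ratio in force)
  moreover have "(\<Sum>i\<in>{j<..n}. Im (cLn ((1 - beta i) / 2) (ratio z (Vb i) (Vb (i - 1))))) = 0"
    by (rule sum.neutral) (use assms(5) Im_cLn_ratio in force)
  moreover have "Im (cLn ((1 + beta j) / 2) (ratio z t (Vb (j - 1)))) = 0"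
    using assms(3) Im_cLn_ratio by force
  moreover have "Im (cLn ((1 - beta j) / 2) (ratio z (Vb j) t)) = 0"
    using assms(4) Im_cLn_ratio by force
  ultimately show ?thesis unfolding chifun_def Let_def t_def[symmetric] by simp
qed

lemma mult_affine_diff: "c * (z * a - 1 - (z * b - 1)) = z * (c * (a - b))" for a b c z :: real
  by (simp add: algebra_simps)

locale slope_profile =
  fixes n :: nat and Vb :: "nat \<Rightarrow> real" and beta :: "nat \<Rightarrow> real"
  assumes Vb_mono: "\<And>i. 1 \<le> i \<Longrightarrow> i \<le> n \<Longrightarrow> Vb (i - 1) < Vb i"
    and beta_range: "\<And>i. 1 \<le> i \<Longrightarrow> i \<le> n \<Longrightarrow> -1 \<le> beta i \<and> beta i \<le> 1"
    and beta_0: "beta 0 = -1"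
    and beta_last: "beta (Suc n) = 1"
begin

abbreviation pole :: "nat \<Rightarrow> real" where
  "pole i \<equiv> exp (Vb i)"

lemma Vb_mono_le: "i \<le> j \<Longrightarrow> j \<le> n \<Longrightarrow> Vb i \<le> Vb j"
proof (induction j)
  case (Suc j)
  then show ?case
    using Vb_mono[of "Suc j"] by (cases "i = Suc j") force+
qed simp

lemma pole_mono: "i \<le> j \<Longrightarrow> j \<le> n \<Longrightarrow> pole i \<le> pole j"
  using Vb_mono_le by simp

text \<open>Gap \<open>k\<close> is the interval \<open>(e^{V_{k-1}}, e^{V_k})\<close>; the gaps \<open>0\<close> and \<open>n + 1\<close>
  are the unbounded intervals below the first and above the last pole.\<close>
definition in_gap :: "nat \<Rightarrow> real \<Rightarrow> bool" where
  "in_gap k z \<longleftrightarrow> (k = 0 \<or> pole (k - 1) < z) \<and> (k = Suc n \<or> z < pole k)"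

lemma frakU_in_gap:
  assumes "z \<in> frakU n Vb beta"
  obtains k where "k \<le> Suc n" "in_gap k z" "beta k = 1 \<or> beta k = -1"
proof -
  consider "z < pole 0" | "pole n < z"
    | k where "1 \<le> k" "k \<le> n" "beta k = 1 \<or> beta k = -1" "pole (k - 1) < z" "z < pole k"
    using assms unfolding frakU_def by auto
  then show ?thesis
  proof cases
    case 1
    then show ?thesis using that[of 0] beta_0 by (simp add: in_gap_def)
  next
    case 2
    then show ?thesis using that[of "Suc n"] beta_last by (simp add: in_gap_def)
  next
    case (3 k)
    then show ?thesis using that[of k] by (simp add: in_gap_def)
  qed
qed

lemma same_side_other_gap:
  assumes "k \<le> Suc n" "in_gap k z" "1 \<le> i" "i \<le> n" "i \<noteq> k"
  shows "same_side z (pole (i - 1)) (pole i)"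
proof (cases "i < k")
  case True
  then have "pole (k - 1) < z"
    using assms(2) unfolding in_gap_def by auto
  moreover have "pole (i - 1) \<le> pole (k - 1)" "pole i \<le> pole (k - 1)"
    using pole_mono True assms(1) by auto
  ultimately show ?thesis unfolding same_side_def by linarith
next
  case False
  then have "z < pole k"
    using assms(2,4) unfolding in_gap_def by auto
  moreover have "pole k \<le> pole (i - 1)" "pole k \<le> pole i"
    using pole_mono False assms(4,5) by auto
  ultimately show ?thesis unfolding same_side_def by linarith
qed

lemma pole_inverse_less:
  assumes "1 \<le> i" "i \<le> n" "same_side z (pole (i - 1)) (pole i)"
  shows "1 / (z - pole (i - 1)) < 1 / (z - pole i)"
  using same_side_inverse_less Vb_mono assms by simp

lemma Tfun_affine:
  "z * Tfun n Vb beta z - 1 = (\<Sum>i=0..n. (beta (Suc i) - beta i) / 2 * (z * (1 / (z - pole i)) - 1))"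
  unfolding Tfun_def slope_weighted_sum_affine[OF beta_0 beta_last] ..

lemma Tfun_pos:
  assumes "pole 0 < z"
    and outside: "\<And>i. 1 \<le> i \<Longrightarrow> i \<le> n \<Longrightarrow> beta i = 1 \<or> same_side z (pole (i - 1)) (pole i)"
  shows "0 < Tfun n Vb beta z" and "0 < z - 1 / Tfun n Vb beta z" and "z - 1 / Tfun n Vb beta z < z"
proof -
  define T where "T = Tfun n Vb beta z"
  have jump: "0 \<le> (1 - beta i) * (1 / (z - pole i) - 1 / (z - pole (i - 1)))" if "1 \<le> i" "i \<le> n" for i
  proof (cases "beta i = 1")
    case False
    then show ?thesis using outside[OF that] pole_inverse_less[OF that, of z] beta_range[OF that]
      by (auto intro!: mult_nonneg_nonneg)
  qed simp
  have "1 / (z - pole 0) \<le> T"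
    unfolding T_def Tfun_def by (rule slope_weighted_sum_ge_first[OF beta_0 beta_last]) (use jump in simp)
  moreover have "0 < 1 / (z - pole 0)" using assms(1) by simp
  ultimately show T_pos: "0 < T" unfolding T_def by linarith
  have "0 < z" using assms(1) exp_gt_zero[of "Vb 0"] by linarith
  have "z * (1 / (z - pole 0)) - 1 \<le> z * T - 1"
    unfolding T_def Tfun_affine
  proof (rule slope_weighted_sum_ge_first[OF beta_0 beta_last])
    fix i assume "1 \<le> i" "i \<le> n"
    show "0 \<le> (1 - beta i) * (z * (1 / (z - pole i)) - 1 - (z * (1 / (z - pole (i - 1))) - 1))"
      unfolding mult_affine_diff using jump[OF \<open>1 \<le> i\<close> \<open>i \<le> n\<close>] \<open>0 < z\<close> by simp
  qed
  moreover have "z * (1 / (z - pole 0)) - 1 = pole 0 / (z - pole 0)"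
    using assms(1) by (simp add: field_simps)
  moreover have "0 < pole 0 / (z - pole 0)" using assms(1) by simp
  ultimately have "0 < (z * T - 1) / T" using T_pos by simp
  then show "0 < z - 1 / T" using T_pos by (simp add: field_simps)
  show "z - 1 / T < z" using T_pos by simp
qed

lemma Tfun_neg:
  assumes "z < pole n"
    and outside: "\<And>i. 1 \<le> i \<Longrightarrow> i \<le> n \<Longrightarrow> beta i = -1 \<or> same_side z (pole (i - 1)) (pole i)"
  shows "Tfun n Vb beta z < 0" and "0 < z - 1 / Tfun n Vb beta z" and "z < z - 1 / Tfun n Vb beta z"
proof -
  define T where "T = Tfun n Vb beta z"
  have jump: "0 \<le> (1 + beta i) * (1 / (z - pole i) - 1 / (z - pole (i - 1)))" if "1 \<le> i" "i \<le> n" for i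
  proof (cases "beta i = -1")
    case False
    then show ?thesis using outside[OF that] pole_inverse_less[OF that, of z] beta_range[OF that]
      by (auto intro!: mult_nonneg_nonneg)
  qed simp
  have "T \<le> 1 / (z - pole n)"
    unfolding T_def Tfun_def by (rule slope_weighted_sum_le_last[OF beta_0 beta_last]) (use jump in simp)
  moreover have "1 / (z - pole n) < 0" using assms(1) by simp
  ultimately show T_neg: "T < 0" unfolding T_def by linarith
  then have "1 / T < 0" by simp
  then show "z < z - 1 / T" by simp
  show "0 < z - 1 / T"
  proof (cases "0 < z")
    case True
    then show ?thesis using \<open>1 / T < 0\<close> by linarith
  next
    case False
    have below: "z < pole i" for i using False exp_gt_zero[of "Vb i"] by linarith
    have "z * T - 1 \<le> z * (1 / (z - pole 0)) - 1"
      unfolding T_def Tfun_affine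
    proof (rule slope_weighted_sum_le_first[OF beta_0 beta_last])
      fix i assume i: "1 \<le> i" "i \<le> n"
      have "same_side z (pole (i - 1)) (pole i)" using below unfolding same_side_def by simp
      then have "0 \<le> 1 / (z - pole i) - 1 / (z - pole (i - 1))"
        using pole_inverse_less[OF i] by (simp add: less_imp_le)
      then have "0 \<le> (1 - beta i) * (1 / (z - pole i) - 1 / (z - pole (i - 1)))"
        using beta_range[OF i] by simp
      then show "(1 - beta i) * (z * (1 / (z - pole i)) - 1 - (z * (1 / (z - pole (i - 1))) - 1)) \<le> 0"
        unfolding mult_affine_diff using False by (simp add: mult_nonpos_nonneg)
    qed
    also have "z * (1 / (z - pole 0)) - 1 = pole 0 / (z - pole 0)"
      using below[of 0] by (simp add: field_simps)
    also have "\<dots> < 0" using below[of 0] by (simp add: divide_pos_neg)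
    finally have "0 < (z * T - 1) / T" using T_neg by (simp add: divide_neg_neg)
    then show ?thesis using T_neg by (simp add: field_simps)
  qed
qed

lemma Im_chifun_eq_0_tau_below:
  assumes "1 \<le> j" "j \<le> n" "Vb (j - 1) < taufun n Vb beta z" "exp (taufun n Vb beta z) < z"
    and outside: "\<And>i. 1 \<le> i \<Longrightarrow> i \<le> n \<Longrightarrow> beta i = 1 \<or> same_side z (pole (i - 1)) (pole i)"
  shows "Im (chifun n Vb beta Vf j z) = 0"
proof -
  define t where "t = taufun n Vb beta z"
  have left: "pole i < z" if "i < j" for i
  proof -
    have "pole i \<le> pole (j - 1)" using pole_mono that assms(2) by auto
    also have "\<dots> < exp t" using assms(3) t_def by simp
    also have "\<dots> < z" using assms(4) t_def by simp
    finally show ?thesis .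
  qed
  have "same_side z (pole i) (pole (i - 1))" if "i < j" for i
    using left[of i] left[of "i - 1"] that unfolding same_side_def by simp
  moreover have "same_side z (exp t) (pole (j - 1))"
    using left[of "j - 1"] assms(1,4) t_def unfolding same_side_def by simp
  moreover have "beta j = 1 \<or> same_side z (pole j) (exp t)"
    using outside[OF assms(1,2)] left[of "j - 1"] assms(1,4) t_def unfolding same_side_def by auto
  ultimately show ?thesis
    unfolding t_def using assms(1,2) outside same_side_commute by (intro Im_chifun_eq_0) auto
qed

lemma Im_chifun_eq_0_tau_above:
  assumes "1 \<le> j" "j \<le> n" "taufun n Vb beta z < Vb j" "z < exp (taufun n Vb beta z)"
    and outside: "\<And>i. 1 \<le> i \<Longrightarrow> i \<le> n \<Longrightarrow> beta i = -1 \<or> same_side z (pole (i - 1)) (pole i)"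
  shows "Im (chifun n Vb beta Vf j z) = 0"
proof -
  define t where "t = taufun n Vb beta z"
  have right: "z < pole i" if "j \<le> i" "i \<le> n" for i
  proof -
    have "z < exp t" using assms(4) t_def by simp
    also have "\<dots> < pole j" using assms(3) t_def by simp
    also have "\<dots> \<le> pole i" using pole_mono that by auto
    finally show ?thesis .
  qed
  have "same_side z (pole i) (pole (i - 1))" if "j < i" "i \<le> n" for i
    using right[of i] right[of "i - 1"] that unfolding same_side_def by simp
  moreover have "same_side z (pole j) (exp t)"
    using right[of j] assms(2,4) t_def unfolding same_side_def by simp
  moreover have "beta j = -1 \<or> same_side z (exp t) (pole (j - 1))"
    using outside[OF assms(1,2)] right[of j] assms(2,4) t_def unfolding same_side_def by auto
  ultimately show ?thesis
    unfolding t_def using assms(1,2) outside same_side_commute by (intro Im_chifun_eq_0) auto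
qed

end

theorem proposition4p1:
  fixes n :: nat and Vb :: "nat \<Rightarrow> real" and beta :: "nat \<Rightarrow> real"
    and Vf :: "real \<Rightarrow> real" and z :: real
  assumes Vb_mono: "\<And>i. 1 \<le> i \<Longrightarrow> i \<le> n \<Longrightarrow> Vb (i - 1) < Vb i"
    and beta_range: "\<And>i. 1 \<le> i \<Longrightarrow> i \<le> n \<Longrightarrow> -1 \<le> beta i \<and> beta i \<le> 1"
    and beta_0: "beta 0 = -1"
    and beta_last: "beta (Suc n) = 1"
    and beta_ne: "\<And>i. i \<le> n \<Longrightarrow> beta i \<noteq> beta (Suc i)"
    and Vf_lin: "\<And>i x. 1 \<le> i \<Longrightarrow> i \<le> n \<Longrightarrow> Vb (i - 1) \<le> x \<Longrightarrow> x \<le> Vb i \<Longrightarrow>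
                   Vf x = Vf (Vb (i - 1)) + beta i * (x - Vb (i - 1))"
    and zU: "z \<in> frakU n Vb beta"
  shows "Tfun n Vb beta z \<noteq> 0 \<and> z - 1 / Tfun n Vb beta z > 0 \<and>
         (\<forall>j. 1 \<le> j \<and> j \<le> n \<and> Vb (j - 1) < taufun n Vb beta z \<and> taufun n Vb beta z < Vb j
              \<longrightarrow> Im (chifun n Vb beta Vf j z) = 0)"
proof -
  interpret slope_profile n Vb beta
    using Vb_mono beta_range beta_0 beta_last by unfold_locales
  obtain k where k: "k \<le> Suc n" "in_gap k z" and beta_k: "beta k = 1 \<or> beta k = -1"
    using zU by (rule frakU_in_gap)
  have outside: "same_side z (pole (i - 1)) (pole i)" if "1 \<le> i" "i \<le> n" "i \<noteq> k" for i
    using same_side_other_gap[OF k that] .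
  have exp_tau: "exp (taufun n Vb beta z) = z - 1 / Tfun n Vb beta z" if "0 < z - 1 / Tfun n Vb beta z"
    using that by (simp add: taufun_def)
  from beta_k show ?thesis
  proof
    assume "beta k = 1"
    then have "pole (k - 1) < z" "pole 0 \<le> pole (k - 1)"
      using k beta_0 pole_mono[of 0 "k - 1"] unfolding in_gap_def by auto
    then have "pole 0 < z" by linarith
    have up: "beta i = 1 \<or> same_side z (pole (i - 1)) (pole i)" if "1 \<le> i" "i \<le> n" for i
      using outside[OF that] \<open>beta k = 1\<close> by blast
    show ?thesis
      using Tfun_pos[OF \<open>pole 0 < z\<close> up] Im_chifun_eq_0_tau_below[OF _ _ _ _ up] exp_tau by auto
  next
    assume "beta k = -1"
    then have "k \<le> n" using k(1) beta_last by (cases "k = Suc n") auto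
    then have "z < pole k" "pole k \<le> pole n"
      using k(2) pole_mono[of k n] unfolding in_gap_def by auto
    then have "z < pole n" by linarith
    have down: "beta i = -1 \<or> same_side z (pole (i - 1)) (pole i)" if "1 \<le> i" "i \<le> n" for i
      using outside[OF that] \<open>beta k = -1\<close> by blast
    show ?thesis
      using Tfun_neg[OF \<open>z < pole n\<close> down] Im_chifun_eq_0_tau_above[OF _ _ _ _ down] exp_tau by auto
  qed
qed

end
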